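(* Let $u\ge1$, $d\ge0$, $d'\ge0$ be integers. Let $T=\{T_1,\dots,T_l\}\in L(d+u,d)$ and $T'=\{T'_1,\dots,T'_l\}\in L(d'+u,d')$ satisfy $\operatorname{codim}_d(T_i)=\operatorname{codim}_{d'}(T'_i)$ for each $i$. Define $\bar\mu_{u,d}(T)=\mu_{d+u,d}(T)$. Then $\bar\mu_{u,d}(T)=\bar\mu_{u,d'}(T')$.
   Context: For a finite set $X$ let $\operatorname{codim}_d(X)=d+1-|X|$. For a finite collection $\{T_1,\dots,T_l\}$ of pairwise distinct finite sets put $\rho_d(\{T_1,\dots,T_l\})=\sum_{i=1}^l\operatorname{codim}_d(T_i)$ (with $\rho_d(\emptyset)=0$) and $D_d(\{T_1,\dots,T_l\})=\operatorname{codim}_d(T_1\cap\cdots\cap T_l)-\rho_d(\{T_1,\dots,T_l\})$. For integers $d\ge0$, $n>d$, $L(n,d)$ is the set of all collections $T$ of subsets of $\{1,\dots,n\}$ such that (i) $D_d(T')>0$ for every $T'\subset T$ with $|T'|>1$, and (ii) $0\le|T_i|\le d$ for every $T_i\in T$. It is partially ordered by: $T<T'$ iff $\rho_d(T)<\rho_d(T')$ and for every $T_i\in T$ there exists $T'_j\in T'$ with $T'_j\subset T_i$; $T\le T'$ means $T<T'$ or $T=T'$. The Möbius function $\mu_{n,d}$ of $L(n,d)$ is defined by $\mu_{n,d}(T,T)=1$ and $\sum_{S:\,T\le S\le T'}\mu_{n,d}(T,S)=0$ for $T<T'$; and $\mu_{n,d}(T):=\mu_{n,d}(\emptyset,T)$.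 *)

theory Defs
  imports Main
begin

definition codim :: "nat \<Rightarrow> nat set \<Rightarrow> int" where
  "codim d X = int d + 1 - int (card X)"

definition rho :: "nat \<Rightarrow> nat set set \<Rightarrow> int" where
  "rho d T = (\<Sum>X\<in>T. codim d X)"

definition Dd :: "nat \<Rightarrow> nat set set \<Rightarrow> int" where
  "Dd d T = codim d (\<Inter>T) - rho d T"

definition L :: "nat \<Rightarrow> nat \<Rightarrow> nat set set set" where
  "L n d = {T. T \<subseteq> Pow {1..n}
              \<and> (\<forall>T'\<subseteq>T. card T' > 1 \<longrightarrow> Dd d T' > 0)
              \<and> (\<forall>X\<in>T. card X \<le> d)}"

definition lessL :: "nat \<Rightarrow> nat set set \<Rightarrow> nat set set \<Rightarrow> bool" where
  "lessL d T T' \<longleftrightarrow> rho d T < rho d T' \<and> (\<forall>X\<in>T. \<exists>Y\<in>T'. Y \<subseteq> X)"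

definition leL :: "nat \<Rightarrow> nat set set \<Rightarrow> nat set set \<Rightarrow> bool" where
  "leL d T T' \<longleftrightarrow> lessL d T T' \<or> T = T'"

lemma rho_nonneg:
  assumes "\<forall>X\<in>T. card X \<le> d"
  shows "rho d T \<ge> 0"
  unfolding rho_def codim_def
  using assms by (intro sum_nonneg) auto

function mob :: "nat \<Rightarrow> nat \<Rightarrow> nat set set \<Rightarrow> nat set set \<Rightarrow> int" where
  "mob n d T T' =
    (if T = T' then 1
     else if T \<in> L n d \<and> T' \<in> L n d \<and> lessL d T T'
     then - (\<Sum>S\<in>{S \<in> L n d. leL d T S \<and> lessL d S T'}. mob n d T S)
     else 0)"
  by pat_completeness auto
termination
proof (relation "measure (\<lambda>(n, d, T, T'). nat (rho d T'))", goal_cases)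
  case 1 then show ?case by simp
next
  case (2 n d T T' S)
  then have "rho d S \<ge> 0" using rho_nonneg[of S d] by (auto simp: L_def)
  with 2 show ?case by (auto simp: lessL_def)
qed

definition mu :: "nat \<Rightarrow> nat \<Rightarrow> nat set set \<Rightarrow> int" where
  "mu n d T = mob n d {} T"

definition mubar :: "nat \<Rightarrow> nat \<Rightarrow> nat set set \<Rightarrow> int" where
  "mubar u d T = mu (d + u) d T"

end

theory Submission
  imports Defs
begin

text \<open>Two members of a collection \<open>T \<in> L(n,d)\<close> never lie in a common set of size at most \<open>d\<close>,
  so every set \<open>X\<close> in a collection below \<open>T\<close> lies above a unique base \<open>A \<in> T\<close> and is determined
  by the part of \<open>{1..n} - A\<close> that it misses. Since \<open>|{1..n} - A| = codim\<^sub>d(A) + n - d - 1\<close>,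
  bijections \<open>{1..n} - T\<^sub>i \<rightarrow> {1..n'} - T'\<^sub>i\<close> transport such sets from \<open>T\<close> to \<open>T'\<close> whenever
  \<open>n - d = n' - d'\<close>. Written with complements, \<open>D\<^sub>d(R) = (|R| - 1)(n - d - 1) - overlap(R)\<close>, the
  overlap being the sum of the sizes of the complements minus the size of their union. Grouping a
  collection by bases, its overlap is at most the overlaps within the groups plus the overlap of the
  bases, so the conditions defining \<open>L\<close> need only be checked within groups, where the transport
  preserves them. The transport is therefore an order isomorphism between the collections below \<open>T\<close>
  and below \<open>T'\<close>, and the Moebius values agree.\<close>

definition complement :: "nat \<Rightarrow> nat set \<Rightarrow> nat set" where
  "complement n X = {1..n} - X"

lemma finite_complement [simp]: "finite (complement n X)"
  by (simp add: complement_def)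

lemma complement_complement: "A \<subseteq> {1..n} \<Longrightarrow> complement n (complement n A) = A"
  unfolding complement_def by auto

lemma complement_subset_iff:
  "X \<subseteq> {1..n} \<Longrightarrow> Y \<subseteq> {1..n} \<Longrightarrow> complement n X \<subseteq> complement n Y \<longleftrightarrow> Y \<subseteq> X"
  unfolding complement_def by auto

lemma complement_Inter: "R \<noteq> {} \<Longrightarrow> complement n (\<Inter>R) = (\<Union>X\<in>R. complement n X)"
  unfolding complement_def by auto

lemma card_complement:
  assumes "X \<subseteq> {1..n}"
  shows "int (card (complement n X)) = int n - int (card X)"
proof -
  have "card X \<le> n"
    using card_mono[OF finite_atLeastAtMost assms] by simp
  moreover have "card (complement n X) = n - card X"
    using assms finite_subset[OF assms] unfolding complement_def by (simp add: card_Diff_subset)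
  ultimately show ?thesis by simp
qed

lemma codim_eq_card_complement:
  "X \<subseteq> {1..n} \<Longrightarrow> codim d X = int (card (complement n X)) - (int n - int d - 1)"
  using card_complement[of X n] unfolding codim_def by simp

definition overlap :: "('a \<Rightarrow> 'b set) \<Rightarrow> 'a set \<Rightarrow> int" where
  "overlap A K = int (\<Sum>k\<in>K. card (A k)) - int (card (\<Union>k\<in>K. A k))"

lemma overlap_cong: "(\<And>k. k \<in> K \<Longrightarrow> A k = B k) \<Longrightarrow> overlap A K = overlap B K"
  unfolding overlap_def by (metis (no_types, lifting) SUP_cong sum.cong)

lemma overlap_singleton: "finite (A k) \<Longrightarrow> overlap A {k} = 0"
  by (simp add: overlap_def)

lemma overlap_reindex: "inj_on g K \<Longrightarrow> overlap A (g ` K) = overlap (A \<circ> g) K"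
  by (simp add: overlap_def sum.reindex)

lemma overlap_image:
  assumes "inj_on h (\<Union>k\<in>K. A k)"
  shows "overlap (\<lambda>k. h ` A k) K = overlap A K"
proof -
  have "card (h ` A k) = card (A k)" if "k \<in> K" for k
    using card_image inj_on_subset[OF assms] that by blast
  moreover have "card (\<Union>k\<in>K. h ` A k) = card (\<Union>k\<in>K. A k)"
    using card_image[OF assms] by (simp add: image_UN)
  ultimately show ?thesis
    unfolding overlap_def by simp
qed

lemma overlap_mono:
  assumes "finite K" and "\<And>k. k \<in> K \<Longrightarrow> A k \<subseteq> B k \<and> finite (B k)"
  shows "overlap A K \<le> overlap B K"
  using assms
proof (induction K rule: finite_induct)
  case empty
  then show ?case by (simp add: overlap_def)
next
  case (insert j K)
  let ?UA = "\<Union>k\<in>K. A k" and ?UB = "\<Union>k\<in>K. B k"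
  have fin: "finite (A j)" "finite ?UA" "finite (B j)" "finite ?UB"
    using insert by (auto intro: finite_subset)
  have "card (A j \<inter> ?UA) \<le> card (B j \<inter> ?UB)"
    using insert.prems fin by (intro card_mono) auto
  moreover have "overlap A K \<le> overlap B K"
    using insert by simp
  ultimately show ?case
    using card_Un_Int[of "A j" ?UA] card_Un_Int[of "B j" ?UB] fin insert.hyps
    by (simp add: overlap_def)
qed

lemma overlap_group:
  assumes "finite R"
  shows "overlap A R = (\<Sum>k\<in>g ` R. overlap A {x\<in>R. g x = k})
           + overlap (\<lambda>k. \<Union>x\<in>{x\<in>R. g x = k}. A x) (g ` R)"
proof -
  have "(\<Sum>x\<in>R. card (A x)) = (\<Sum>k\<in>g ` R. \<Sum>x\<in>{x\<in>R. g x = k}. card (A x))"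
    using sum.group[where g = g and h = "\<lambda>x. card (A x)", OF assms finite_imageI subset_refl]
    by (simp add: assms)
  moreover have "(\<Union>x\<in>R. A x) = (\<Union>k\<in>g ` R. \<Union>x\<in>{x\<in>R. g x = k}. A x)"
    by auto
  ultimately show ?thesis
    unfolding overlap_def by (simp add: sum_subtractf)
qed

lemma Dd_eq_overlap:
  assumes "finite R" "R \<noteq> {}" "\<And>X. X \<in> R \<Longrightarrow> X \<subseteq> {1..n}"
  shows "Dd d R = (int (card R) - 1) * (int n - int d - 1) - overlap (complement n) R"
proof -
  have "\<Inter>R \<subseteq> {1..n}"
    using assms(2,3) by blast
  then have "codim d (\<Inter>R) = int (card (\<Union>X\<in>R. complement n X)) - (int n - int d - 1)"
    using codim_eq_card_complement complement_Inter[OF assms(2)] by metis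
  moreover have "rho d R = (\<Sum>X\<in>R. int (card (complement n X)) - (int n - int d - 1))"
    unfolding rho_def using assms(3) codim_eq_card_complement by (intro sum.cong) auto
  then have "rho d R = int (\<Sum>X\<in>R. card (complement n X)) - int (card R) * (int n - int d - 1)"
    by (simp add: sum_subtractf)
  ultimately show ?thesis
    unfolding Dd_def overlap_def by (simp add: algebra_simps)
qed

lemma Dd_pos_iff_overlap:
  assumes "finite R" "R \<noteq> {}" "\<And>X. X \<in> R \<Longrightarrow> X \<subseteq> {1..n}"
  shows "0 < Dd d R \<longleftrightarrow> overlap (complement n) R < (int (card R) - 1) * (int n - int d - 1)"
  using Dd_eq_overlap[OF assms] by simp

lemma finite_L: "T \<in> L n d \<Longrightarrow> finite T"
  using finite_subset[of T "Pow {1..n}"] unfolding L_def by auto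

lemma L_Dd_pos: "T \<in> L n d \<Longrightarrow> R \<subseteq> T \<Longrightarrow> 1 < card R \<Longrightarrow> 0 < Dd d R"
  unfolding L_def by blast

lemma L_subset: "T \<in> L n d \<Longrightarrow> X \<in> T \<Longrightarrow> X \<subseteq> {1..n}"
  unfolding L_def by blast

lemma L_card_le: "T \<in> L n d \<Longrightarrow> X \<in> T \<Longrightarrow> card X \<le> d"
  unfolding L_def by blast

lemma empty_in_L: "{} \<in> L n d"
  unfolding L_def by auto

lemma lessL_empty:
  assumes "S \<in> L n d" "S \<noteq> {}"
  shows "lessL d {} S"
proof -
  have "0 < rho d S"
    unfolding rho_def codim_def
    using finite_L[OF assms(1)] assms(2) L_card_le[OF assms(1)] by (intro sum_pos) force+
  then show ?thesis
    unfolding lessL_def by (simp add: rho_def)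
qed

lemma lessL_trans: "lessL d R S \<Longrightarrow> lessL d S T \<Longrightarrow> lessL d R T"
  unfolding lessL_def by (meson order.strict_trans subset_trans)

text \<open>For \<open>A \<noteq> B\<close> one has \<open>D\<^sub>d {A, B} = |A \<union> B| - d - 1\<close>.\<close>

lemma L_unique_below:
  assumes T: "T \<in> L n d" and "A \<in> T" "B \<in> T" "A \<subseteq> Z" "B \<subseteq> Z" "finite Z" "card Z \<le> d"
  shows "A = B"
proof (rule ccontr)
  assume ne: "A \<noteq> B"
  have fin: "finite A" "finite B"
    using assms(4-6) finite_subset by auto
  have "0 < Dd d {A, B}"
    using L_Dd_pos[OF T, of "{A, B}"] ne assms(2,3) by auto
  then have "int (card A) + int (card B) > int d + int (card (A \<inter> B))"
    unfolding Dd_def rho_def codim_def using ne by simp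
  moreover have "card (A \<union> B) + card (A \<inter> B) = card A + card B"
    using card_Un_Int[OF fin] by simp
  moreover have "card (A \<union> B) \<le> card Z"
    using assms(4-6) by (intro card_mono) auto
  ultimately show False
    using assms(7) by linarith
qed

lemma overlap_complement_le:
  assumes "finite R" "R \<noteq> {}" "\<And>X. X \<in> R \<Longrightarrow> X \<subseteq> {1..n}"
    and "1 < card R \<Longrightarrow> 0 < Dd d R"
  shows "overlap (complement n) R \<le> (int (card R) - 1) * (int n - int d - 1)"
proof (cases "1 < card R")
  case True
  then show ?thesis
    using assms Dd_pos_iff_overlap[OF assms(1-3)] by simp
next
  case False
  then have "card R = 1"
    using assms(1,2) card_0_eq by fastforce
  then obtain X where "R = {X}"
    using card_1_singletonE by blast
  then show ?thesis
    using \<open>card R = 1\<close> by (simp add: overlap_singleton)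
qed

lemma sum_card_fibres: "finite R \<Longrightarrow> (\<Sum>k\<in>g ` R. card {x\<in>R. g x = k}) = card R"
  using sum.group[where g = g and h = "\<lambda>_. 1::nat", OF _ finite_imageI subset_refl] by simp

lemma Dd_pos_from_fibres:
  assumes T: "T \<in> L n d" and R: "finite R" "1 < card R"
    and g: "\<And>X. X \<in> R \<Longrightarrow> X \<subseteq> {1..n} \<and> g X \<in> T \<and> g X \<subseteq> X"
    and fibres: "\<And>A. 1 < card {X\<in>R. g X = A} \<Longrightarrow> 0 < Dd d {X\<in>R. g X = A}"
  shows "0 < Dd d R"
proof -
  define K where "K = g ` R"
  define fib where "fib A = {X\<in>R. g X = A}" for A
  define w where "w = int n - int d - 1"
  have "R \<noteq> {}" "finite K"
    using R K_def by auto
  then have "K \<noteq> {}"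
    using K_def by auto
  have fib_ne: "fib A \<noteq> {}" if "A \<in> K" for A
    using that K_def fib_def by auto
  have fib_sub: "fib A \<subseteq> R" for A
    by (auto simp: fib_def)
  show ?thesis
  proof (cases "card K = 1")
    case True
    then obtain A where "K = {A}"
      using card_1_singletonE by blast
    then have "R = fib A"
      using K_def fib_def by auto
    then show ?thesis
      using fibres[of A] R(2) unfolding fib_def by metis
  next
    case False
    then have "1 < card K"
      using \<open>finite K\<close> \<open>K \<noteq> {}\<close> by (simp add: card_gt_0_iff Suc_lessI)
    have "0 < Dd d K"
      using L_Dd_pos[OF T _ \<open>1 < card K\<close>] g K_def by auto
    then have across: "overlap (complement n) K < (int (card K) - 1) * w"
      using Dd_pos_iff_overlap[of K n d] \<open>finite K\<close> \<open>K \<noteq> {}\<close> L_subset[OF T] g K_def w_def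
      by auto
    have within: "overlap (complement n) (fib A) \<le> (int (card (fib A)) - 1) * w" if "A \<in> K" for A
      using overlap_complement_le[OF finite_subset[OF fib_sub R(1)] fib_ne[OF that]] fib_sub g fibres
      unfolding w_def fib_def by blast
    have unions: "overlap (\<lambda>A. \<Union>X\<in>fib A. complement n X) K \<le> overlap (complement n) K"
      using \<open>finite K\<close> g by (intro overlap_mono) (auto simp: fib_def complement_def)
    have "(\<Sum>A\<in>K. overlap (complement n) (fib A)) \<le> (\<Sum>A\<in>K. (int (card (fib A)) - 1) * w)"
      using within by (rule sum_mono)
    also have "\<dots> = (int (\<Sum>A\<in>K. card (fib A)) - int (card K)) * w"
      by (simp add: sum_subtractf sum_distrib_right left_diff_distrib)
    also have "(\<Sum>A\<in>K. card (fib A)) = card R"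
      unfolding K_def fib_def by (rule sum_card_fibres[OF R(1)])
    finally have "overlap (complement n) R < (int (card R) - 1) * w"
      using overlap_group[OF R(1), of "complement n" g] across unions
      unfolding K_def[symmetric] fib_def[symmetric] by (simp add: algebra_simps)
    then show ?thesis
      using Dd_pos_iff_overlap[of R n d] R \<open>R \<noteq> {}\<close> g w_def by auto
  qed
qed

declare mob.simps [simp del]

lemma mob_empty_unfold:
  assumes "S \<in> L n d" "S \<noteq> {}"
  shows "mob n d {} S = - (\<Sum>R\<in>{R \<in> L n d. lessL d R S}. mob n d {} R)"
proof -
  have "{R \<in> L n d. leL d {} R \<and> lessL d R S} = {R \<in> L n d. lessL d R S}"
    unfolding leL_def using lessL_empty by blast
  then show ?thesis
    using assms empty_in_L lessL_empty[OF assms] by (subst mob.simps) simp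
qed

locale down_closed_iso =
  fixes n d n' d' :: nat and D D' :: "nat set set set" and F :: "nat set set \<Rightarrow> nat set set"
  assumes bij: "bij_betw F D D'"
    and D: "D \<subseteq> L n d" and D_closed: "\<And>R S. S \<in> D \<Longrightarrow> R \<in> L n d \<Longrightarrow> lessL d R S \<Longrightarrow> R \<in> D"
    and D': "D' \<subseteq> L n' d'"
    and D'_closed: "\<And>R S. S \<in> D' \<Longrightarrow> R \<in> L n' d' \<Longrightarrow> lessL d' R S \<Longrightarrow> R \<in> D'"
    and iso: "\<And>R S. R \<in> D \<Longrightarrow> S \<in> D \<Longrightarrow> lessL d' (F R) (F S) \<longleftrightarrow> lessL d R S"
begin

lemma bij_betw_below:
  assumes S: "S \<in> D"
  shows "bij_betw F {R \<in> L n d. lessL d R S} {R \<in> L n' d'. lessL d' R (F S)}"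
proof -
  have below_D: "{R \<in> L n d. lessL d R S} \<subseteq> D"
    using D_closed[OF S] by blast
  have "F ` {R \<in> L n d. lessL d R S} = {R \<in> L n' d'. lessL d' R (F S)}"
  proof
    show "F ` {R \<in> L n d. lessL d R S} \<subseteq> {R \<in> L n' d'. lessL d' R (F S)}"
      using below_D iso S bij_betw_apply[OF bij] D' by blast
    show "{R \<in> L n' d'. lessL d' R (F S)} \<subseteq> F ` {R \<in> L n d. lessL d R S}"
    proof
      fix R'
      assume R': "R' \<in> {R \<in> L n' d'. lessL d' R (F S)}"
      then have "R' \<in> D'"
        using D'_closed bij_betw_apply[OF bij S] by blast
      then obtain R where "R \<in> D" "R' = F R"
        using bij by (auto simp: bij_betw_def)
      then show "R' \<in> F ` {R \<in> L n d. lessL d R S}"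
        using R' iso S D by blast
    qed
  qed
  then show ?thesis
    using bij_betw_subset[OF bij below_D] by simp
qed

lemma mob_empty_eq:
  assumes "F {} = {}"
  shows "S \<in> D \<Longrightarrow> mob n d {} S = mob n' d' {} (F S)"
proof (induction "nat (rho d S)" arbitrary: S rule: less_induct)
  case less
  show ?case
  proof (cases "S = {}")
    case True
    then show ?thesis
      using assms by (simp add: mob.simps)
  next
    case False
    have SL: "S \<in> L n d"
      using less.prems D by blast
    have "{} \<in> D"
      using D_closed[OF less.prems empty_in_L lessL_empty[OF SL False]] .
    then have FS: "F S \<in> L n' d'" "F S \<noteq> {}"
      using less.prems False assms D' bij_betw_apply[OF bij] bij_betw_imp_inj_on[OF bij]
      by (auto dest: inj_onD)
    define below where "below = {R \<in> L n d. lessL d R S}"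
    have "mob n' d' {} (F S) = - (\<Sum>R\<in>{R \<in> L n' d'. lessL d' R (F S)}. mob n' d' {} R)"
      by (rule mob_empty_unfold[OF FS])
    also have "\<dots> = - (\<Sum>R\<in>below. mob n' d' {} (F R))"
      unfolding below_def by (simp only: sum.reindex_bij_betw[OF bij_betw_below[OF less.prems]])
    also have "\<dots> = - (\<Sum>R\<in>below. mob n d {} R)"
    proof -
      have "nat (rho d R) < nat (rho d S)" if "R \<in> below" for R
        using that rho_nonneg[of R d] L_card_le unfolding below_def lessL_def by fastforce
      then show ?thesis
        using less.hyps D_closed[OF less.prems] unfolding below_def by (auto intro!: sum.cong)
    qed
    also have "\<dots> = mob n d {} S"
      unfolding below_def by (rule mob_empty_unfold[OF SL False, symmetric])
    finally show ?thesis ..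
  qed
qed

end

definition above :: "nat \<Rightarrow> nat \<Rightarrow> nat set set \<Rightarrow> nat set set" where
  "above n d T = {X. X \<subseteq> {1..n} \<and> card X \<le> d \<and> (\<exists>A\<in>T. A \<subseteq> X)}"

definition base :: "nat set set \<Rightarrow> nat set \<Rightarrow> nat set" where
  "base T X = (THE A. A \<in> T \<and> A \<subseteq> X)"

lemma above_subset: "X \<in> above n d T \<Longrightarrow> X \<subseteq> {1..n}"
  unfolding above_def by blast

lemma base_eq:
  assumes T: "T \<in> L n d" and X: "X \<in> above n d T" and "A \<in> T" "A \<subseteq> X"
  shows "base T X = A"
  unfolding base_def
proof (rule the_equality)
  have "finite X" "card X \<le> d"
    using X finite_subset unfolding above_def by auto
  then show "B = A" if "B \<in> T \<and> B \<subseteq> X" for B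
    using L_unique_below[OF T, of B A X] that assms(3,4) by blast
qed (use assms in blast)

lemma base_above:
  assumes "T \<in> L n d" "X \<in> above n d T"
  shows "base T X \<in> T" "base T X \<subseteq> X"
  using assms(2) base_eq[OF assms] unfolding above_def by auto

lemma base_eq_of_subset:
  assumes "T \<in> L n d" "X \<in> above n d T" "Y \<in> above n d T" "Y \<subseteq> X"
  shows "base T Y = base T X"
  using base_eq[OF assms(1,2)] base_above[OF assms(1,3)] assms(4) by blast

lemma complement_above:
  assumes T: "T \<in> L n d" and A: "A \<in> T" and C: "C \<subseteq> complement n A"
    and card_C: "int n - int d \<le> int (card C)"
  shows "complement n C \<in> above n d T" "base T (complement n C) = A"
proof -
  have sub: "complement n C \<subseteq> {1..n}"
    by (simp add: complement_def)
  have A_sub: "A \<subseteq> complement n C"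
    using L_subset[OF T A] C unfolding complement_def by blast
  have "complement n (complement n C) = C"
    using C complement_complement unfolding complement_def by blast
  then have "int (card C) = int n - int (card (complement n C))"
    using card_complement[OF sub] by simp
  then have "card (complement n C) \<le> d"
    using card_C by linarith
  then show X: "complement n C \<in> above n d T"
    using sub A A_sub unfolding above_def by blast
  show "base T (complement n C) = A"
    by (rule base_eq[OF T X A A_sub])
qed

lemma L_iff_common_base:
  assumes T: "T \<in> L n d" and S: "S \<subseteq> above n d T"
  shows "S \<in> L n d \<longleftrightarrow>
    (\<forall>R\<subseteq>S. 1 < card R \<and> (\<forall>X\<in>R. \<forall>Y\<in>R. base T X = base T Y) \<longrightarrow> 0 < Dd d R)"
    (is "_ \<longleftrightarrow> ?common")
proof
  assume ?common
  have S_Pow: "S \<subseteq> Pow {1..n}"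
    using S above_subset by blast
  have "0 < Dd d R" if R: "R \<subseteq> S" "1 < card R" for R
  proof (rule Dd_pos_from_fibres[OF T _ R(2), of "base T"])
    show "finite R"
      using R(1) S_Pow finite_subset by (metis finite_Pow_iff finite_atLeastAtMost)
    show "X \<subseteq> {1..n} \<and> base T X \<in> T \<and> base T X \<subseteq> X" if "X \<in> R" for X
      using that R(1) S base_above[OF T] above_subset by blast
    show "0 < Dd d {X \<in> R. base T X = A}" if "1 < card {X \<in> R. base T X = A}" for A
    proof -
      have "{X \<in> R. base T X = A} \<subseteq> S"
        using R(1) by blast
      then show ?thesis
        using \<open>?common\<close> that by simp
    qed
  qed
  then show "S \<in> L n d"
    using S_Pow S unfolding L_def above_def by blast
qed (use L_Dd_pos in blast)

definition down_set :: "nat \<Rightarrow> nat \<Rightarrow> nat set set \<Rightarrow> nat set set set" where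
  "down_set n d T = {S \<in> L n d. leL d S T}"

lemma down_set_subset_above:
  assumes "T \<in> L n d" "S \<in> down_set n d T"
  shows "S \<subseteq> above n d T"
  using assms L_subset L_card_le unfolding down_set_def leL_def lessL_def above_def by blast

lemma down_set_closed:
  "S \<in> down_set n d T \<Longrightarrow> R \<in> L n d \<Longrightarrow> lessL d R S \<Longrightarrow> R \<in> down_set n d T"
  unfolding down_set_def leL_def using lessL_trans by blast

lemma inj_on_image_subset_iff:
  "inj_on f C \<Longrightarrow> A \<subseteq> C \<Longrightarrow> B \<subseteq> C \<Longrightarrow> f ` A \<subseteq> f ` B \<longleftrightarrow> A \<subseteq> B"
  by (metis inj_on_image_Int le_iff_inf inj_on_image_eq_iff inf.coboundedI1)

locale collection_transfer =
  fixes n d n' d' :: nat and T T' :: "nat set set"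
    and \<sigma> :: "nat set \<Rightarrow> nat set" and h :: "nat set \<Rightarrow> nat \<Rightarrow> nat"
  assumes dims: "int n - int d = int n' - int d'"
    and T: "T \<in> L n d" and T': "T' \<in> L n' d'"
    and \<sigma>: "bij_betw \<sigma> T T'"
    and h: "\<And>A. A \<in> T \<Longrightarrow> bij_betw (h A) (complement n A) (complement n' (\<sigma> A))"
begin

text \<open>A set \<open>X\<close> above \<open>A \<in> T\<close> is determined by the part \<open>complement n X\<close> of \<open>complement n A\<close>
  it misses; \<open>h A\<close> moves this part into \<open>complement n' (\<sigma> A)\<close>.\<close>

definition transport :: "nat set \<Rightarrow> nat set" where
  "transport X = complement n' (h (base T X) ` complement n X)"

lemma transport_subset: "transport X \<subseteq> {1..n'}"
  unfolding transport_def complement_def by blast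

lemma complement_transport:
  assumes X: "X \<in> above n d T"
  shows "complement n' (transport X) = h (base T X) ` complement n X"
proof -
  have "complement n X \<subseteq> complement n (base T X)"
    using base_above[OF T X] unfolding complement_def by blast
  then have "h (base T X) ` complement n X \<subseteq> {1..n'}"
    using h[OF base_above(1)[OF T X]] unfolding bij_betw_def complement_def by blast
  then show ?thesis
    unfolding transport_def complement_def by blast
qed

lemma card_complement_transport:
  assumes X: "X \<in> above n d T"
  shows "card (complement n' (transport X)) = card (complement n X)"
proof -
  have "complement n X \<subseteq> complement n (base T X)"
    using base_above[OF T X] unfolding complement_def by blast
  then show ?thesis
    unfolding complement_transport[OF X]
    using h[OF base_above(1)[OF T X]] by (auto simp: bij_betw_def intro: card_image inj_on_subset)
qed

lemma codim_transport:
  assumes X: "X \<in> above n d T"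
  shows "codim d' (transport X) = codim d X"
  using codim_eq_card_complement[OF transport_subset, of d'] card_complement_transport[OF X]
    codim_eq_card_complement[OF above_subset[OF X], of d] dims by simp

lemma transport_above:
  assumes X: "X \<in> above n d T"
  shows "transport X \<in> above n' d' T'" "\<sigma> (base T X) \<subseteq> transport X"
proof -
  let ?A = "base T X"
  have A: "?A \<in> T" "?A \<subseteq> X"
    using base_above[OF T X] by auto
  have \<sigma>A: "\<sigma> ?A \<in> T'"
    using bij_betw_apply[OF \<sigma> A(1)] .
  have "complement n' (transport X) \<subseteq> complement n' (\<sigma> ?A)"
    using complement_transport[OF X] h[OF A(1)] A(2)
    unfolding bij_betw_def complement_def by blast
  then show below: "\<sigma> ?A \<subseteq> transport X"
    using complement_subset_iff[OF transport_subset L_subset[OF T' \<sigma>A]] by blast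
  have "card X \<le> d"
    using X unfolding above_def by blast
  then have "card (transport X) \<le> d'"
    using card_complement[OF transport_subset[of X]] card_complement[OF above_subset[OF X]]
      card_complement_transport[OF X] dims by linarith
  then show "transport X \<in> above n' d' T'"
    using transport_subset below \<sigma>A unfolding above_def by blast
qed

lemma base_transport:
  assumes X: "X \<in> above n d T"
  shows "base T' (transport X) = \<sigma> (base T X)"
  using base_eq[OF T' transport_above(1)[OF X] bij_betw_apply[OF \<sigma> base_above(1)[OF T X]]
      transport_above(2)[OF X]] .

lemma base_transport_eq_iff:
  assumes "X \<in> above n d T" "Y \<in> above n d T"
  shows "base T' (transport X) = base T' (transport Y) \<longleftrightarrow> base T X = base T Y"
  using inj_on_eq_iff[OF bij_betw_imp_inj_on[OF \<sigma>] base_above(1)[OF T assms(1)] base_above(1)[OF T assms(2)]]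
  by (simp add: assms base_transport)

lemma transport_subset_iff:
  assumes X: "X \<in> above n d T" and Y: "Y \<in> above n d T"
  shows "transport Y \<subseteq> transport X \<longleftrightarrow> Y \<subseteq> X"
proof -
  have same_base: "transport Y \<subseteq> transport X \<longleftrightarrow> Y \<subseteq> X" if eq: "base T Y = base T X"
  proof -
    let ?A = "base T X"
    have "inj_on (h ?A) (complement n ?A)"
      using h[OF base_above(1)[OF T X]] by (simp add: bij_betw_def)
    moreover have "complement n X \<subseteq> complement n ?A" "complement n Y \<subseteq> complement n ?A"
      using base_above[OF T X] base_above[OF T Y] eq unfolding complement_def by auto
    ultimately have "h ?A ` complement n X \<subseteq> h ?A ` complement n Y \<longleftrightarrow> complement n X \<subseteq> complement n Y"
      by (rule inj_on_image_subset_iff)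
    then have "h ?A ` complement n X \<subseteq> h ?A ` complement n Y \<longleftrightarrow> Y \<subseteq> X"
      using complement_subset_iff[OF above_subset[OF X] above_subset[OF Y]] by simp
    moreover have "transport Y \<subseteq> transport X \<longleftrightarrow>
        complement n' (transport X) \<subseteq> complement n' (transport Y)"
      using complement_subset_iff[OF transport_subset transport_subset] by simp
    ultimately show ?thesis
      using complement_transport[OF X] complement_transport[OF Y] eq by simp
  qed
  show ?thesis
  proof
    assume "transport Y \<subseteq> transport X"
    then have "base T Y = base T X"
      using base_eq_of_subset[OF T' transport_above(1)[OF X] transport_above(1)[OF Y]]
        base_transport_eq_iff[OF Y X] by simp
    then show "Y \<subseteq> X"
      using same_base \<open>transport Y \<subseteq> transport X\<close> by blast
  qed (use same_base base_eq_of_subset[OF T X Y] in blast)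
qed

lemma inj_on_transport: "inj_on transport (above n d T)"
proof (rule inj_onI)
  fix X Y
  assume "X \<in> above n d T" "Y \<in> above n d T" "transport X = transport Y"
  then show "X = Y"
    using transport_subset_iff[of X Y] transport_subset_iff[of Y X] by auto
qed

lemma transport_base:
  assumes A: "A \<in> T"
  shows "transport A = \<sigma> A"
proof -
  have A_above: "A \<in> above n d T"
    using A L_subset[OF T] L_card_le[OF T] unfolding above_def by blast
  then have "base T A = A"
    using base_eq[OF T _ A] by blast
  then have "transport A = complement n' (h A ` complement n A)"
    by (simp add: transport_def)
  also have "\<dots> = complement n' (complement n' (\<sigma> A))"
    using h[OF A] by (simp add: bij_betw_def)
  also have "\<dots> = \<sigma> A"
    using complement_complement L_subset[OF T' bij_betw_apply[OF \<sigma> A]] by blast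
  finally show ?thesis .
qed

lemma image_transport_base: "transport ` T = T'"
  using transport_base bij_betw_imp_surj_on[OF \<sigma>] by simp

lemma image_transport_above: "transport ` above n d T = above n' d' T'"
proof
  show "transport ` above n d T \<subseteq> above n' d' T'"
    using transport_above(1) by blast
  show "above n' d' T' \<subseteq> transport ` above n d T"
  proof
    fix Y
    assume Y: "Y \<in> above n' d' T'"
    define A where "A = inv_into T \<sigma> (base T' Y)"
    have A: "A \<in> T" "\<sigma> A = base T' Y"
      using base_above(1)[OF T' Y] \<sigma> unfolding A_def
      by (auto simp: bij_betw_def inv_into_into f_inv_into_f)
    define C where "C = inv_into (complement n A) (h A) ` complement n' Y"
    have "complement n' Y \<subseteq> complement n' (\<sigma> A)"
      using base_above(2)[OF T' Y] A(2) unfolding complement_def by blast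
    then have sub: "complement n' Y \<subseteq> h A ` complement n A"
      using h[OF A(1)] by (simp add: bij_betw_def)
    have hC: "h A ` C = complement n' Y"
      unfolding C_def by (rule image_inv_into_cancel[OF refl sub])
    have C_sub: "C \<subseteq> complement n A"
      unfolding C_def using sub by (auto intro: inv_into_into)
    have "card C = card (complement n' Y)"
      using hC C_sub h[OF A(1)] by (metis bij_betw_def card_image inj_on_subset)
    moreover have "card Y \<le> d'"
      using Y unfolding above_def by blast
    ultimately have "int n - int d \<le> int (card C)"
      using card_complement[OF above_subset[OF Y]] dims by linarith
    note X = complement_above[OF T A(1) C_sub this]
    have "C \<subseteq> {1..n}"
      using C_sub unfolding complement_def by blast
    then have "transport (complement n C) = complement n' (h A ` C)"
      unfolding transport_def X(2) by (simp add: complement_complement)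
    also have "\<dots> = Y"
      using hC complement_complement above_subset[OF Y] by metis
    finally show "Y \<in> transport ` above n d T"
      using X(1) by blast
  qed
qed

lemma Dd_transport:
  assumes R: "R \<subseteq> above n d T" "finite R" "R \<noteq> {}"
    and common: "\<And>X. X \<in> R \<Longrightarrow> base T X = A"
  shows "Dd d' (transport ` R) = Dd d R"
proof -
  have inj: "inj_on transport R"
    using inj_on_subset[OF inj_on_transport R(1)] .
  obtain X0 where "X0 \<in> R"
    using R(3) by blast
  then have A: "A \<in> T"
    using common base_above(1)[OF T] R(1) by blast
  have "inj_on (h A) (\<Union>X\<in>R. complement n X)"
  proof (rule inj_on_subset)
    show "inj_on (h A) (complement n A)"
      using h[OF A] by (simp add: bij_betw_def)
    show "(\<Union>X\<in>R. complement n X) \<subseteq> complement n A"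
      using common base_above(2)[OF T] R(1) unfolding complement_def by blast
  qed
  then have "overlap (complement n') (transport ` R) = overlap (complement n) R"
  proof -
    assume inj_h: "inj_on (h A) (\<Union>X\<in>R. complement n X)"
    have "overlap (complement n') (transport ` R) = overlap (complement n' \<circ> transport) R"
      by (rule overlap_reindex[OF inj])
    also have "\<dots> = overlap (\<lambda>X. h A ` complement n X) R"
      using complement_transport common R(1) by (intro overlap_cong) auto
    also have "\<dots> = overlap (complement n) R"
      by (rule overlap_image[OF inj_h])
    finally show ?thesis .
  qed
  moreover have "card (transport ` R) = card R"
    using card_image[OF inj] .
  moreover have "\<And>X. X \<in> R \<Longrightarrow> X \<subseteq> {1..n}"
    using R(1) above_subset by blast
  moreover have "\<And>X. X \<in> transport ` R \<Longrightarrow> X \<subseteq> {1..n'}"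
    using transport_subset by blast
  ultimately show ?thesis
    using Dd_eq_overlap[OF R(2,3), of n d] Dd_eq_overlap[of "transport ` R" n' d'] R(2,3) dims
    by simp
qed

lemma L_transport_iff:
  assumes S: "S \<subseteq> above n d T"
  shows "transport ` S \<in> L n' d' \<longleftrightarrow> S \<in> L n d"
proof -
  have tS: "transport ` S \<subseteq> above n' d' T'"
    using S transport_above(1) by blast
  have key: "(1 < card (transport ` R) \<and> (\<forall>X\<in>transport ` R. \<forall>Y\<in>transport ` R. base T' X = base T' Y)
          \<longrightarrow> 0 < Dd d' (transport ` R))
      \<longleftrightarrow> (1 < card R \<and> (\<forall>X\<in>R. \<forall>Y\<in>R. base T X = base T Y) \<longrightarrow> 0 < Dd d R)"
    if R: "R \<subseteq> S" for R
  proof -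
    have RA: "R \<subseteq> above n d T"
      using R S by blast
    have card: "card (transport ` R) = card R"
      using card_image inj_on_subset[OF inj_on_transport RA] by blast
    have common: "(\<forall>X\<in>transport ` R. \<forall>Y\<in>transport ` R. base T' X = base T' Y)
        \<longleftrightarrow> (\<forall>X\<in>R. \<forall>Y\<in>R. base T X = base T Y)"
      using base_transport_eq_iff RA by (simp add: subset_iff)
    have Dd_eq: "Dd d' (transport ` R) = Dd d R"
      if card_R: "1 < card R" and common_R: "\<forall>X\<in>R. \<forall>Y\<in>R. base T X = base T Y"
    proof -
      obtain X0 where "X0 \<in> R"
        using card_R by fastforce
      moreover have "finite R"
        using card_R card.infinite by fastforce
      ultimately show ?thesis
        using Dd_transport[OF RA, of "base T X0"] common_R by blast
    qed
    show ?thesis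
      unfolding card common using Dd_eq by metis
  qed
  show ?thesis
    unfolding L_iff_common_base[OF T S] L_iff_common_base[OF T' tS] all_subset_image
    by (intro all_cong1 imp_cong[OF refl]) (fact key)
qed

lemma rho_transport:
  assumes S: "S \<subseteq> above n d T"
  shows "rho d' (transport ` S) = rho d S"
proof -
  have "rho d' (transport ` S) = (\<Sum>X\<in>S. codim d' (transport X))"
    unfolding rho_def by (simp add: sum.reindex[OF inj_on_subset[OF inj_on_transport S]])
  also have "\<dots> = rho d S"
    unfolding rho_def using S codim_transport by (auto intro: sum.cong)
  finally show ?thesis .
qed

lemma lessL_transport_iff:
  assumes "R \<subseteq> above n d T" "S \<subseteq> above n d T"
  shows "lessL d' (transport ` R) (transport ` S) \<longleftrightarrow> lessL d R S"
  using assms transport_subset_iff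
  unfolding lessL_def rho_transport[OF assms(1)] rho_transport[OF assms(2)]
  by (simp add: subset_iff)

lemma bij_betw_down_set:
  "bij_betw (image transport) (down_set n d T) (down_set n' d' T')"
proof -
  have T_above: "T \<subseteq> above n d T"
    using down_set_subset_above[OF T] T unfolding down_set_def leL_def by blast
  have down_iff: "transport ` S \<in> down_set n' d' T' \<longleftrightarrow> S \<in> down_set n d T"
    if S: "S \<subseteq> above n d T" for S
    unfolding down_set_def leL_def image_transport_base[symmetric]
    by (simp add: L_transport_iff[OF S] lessL_transport_iff[OF S T_above]
        inj_on_image_eq_iff[OF inj_on_transport S T_above])
  show ?thesis
  proof (rule bij_betw_imageI)
    show "inj_on (image transport) (down_set n d T)"
      by (rule inj_on_image, rule inj_on_subset[OF inj_on_transport])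
        (use down_set_subset_above[OF T] in blast)
    show "image transport ` down_set n d T = down_set n' d' T'"
    proof
      show "image transport ` down_set n d T \<subseteq> down_set n' d' T'"
        using down_iff down_set_subset_above[OF T] by blast
      show "down_set n' d' T' \<subseteq> image transport ` down_set n d T"
      proof
        fix S'
        assume S': "S' \<in> down_set n' d' T'"
        then have "S' \<subseteq> transport ` above n d T"
          using down_set_subset_above[OF T'] image_transport_above by simp
        then obtain S where "S \<subseteq> above n d T" "S' = transport ` S"
          unfolding subset_image_iff by blast
        then show "S' \<in> image transport ` down_set n d T"
          using down_iff S' by blast
      qed
    qed
  qed
qed

sublocale down_closed_iso n d n' d' "down_set n d T" "down_set n' d' T'" "image transport"
proof
  show "bij_betw (image transport) (down_set n d T) (down_set n' d' T')"
    by (rule bij_betw_down_set)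
  show "down_set n d T \<subseteq> L n d" "down_set n' d' T' \<subseteq> L n' d'"
    unfolding down_set_def by blast+
  show "\<And>R S. S \<in> down_set n d T \<Longrightarrow> R \<in> L n d \<Longrightarrow> lessL d R S \<Longrightarrow> R \<in> down_set n d T"
    "\<And>R S. S \<in> down_set n' d' T' \<Longrightarrow> R \<in> L n' d' \<Longrightarrow> lessL d' R S \<Longrightarrow> R \<in> down_set n' d' T'"
    by (fact down_set_closed)+
  show "lessL d' (transport ` R) (transport ` S) \<longleftrightarrow> lessL d R S"
    if "R \<in> down_set n d T" "S \<in> down_set n d T" for R S
    using lessL_transport_iff down_set_subset_above[OF T] that by blast
qed

theorem mob_empty_transport: "mob n d {} T = mob n' d' {} T'"
proof -
  have "T \<in> down_set n d T"
    using T unfolding down_set_def leL_def by blast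
  then show ?thesis
    using mob_empty_eq[OF image_empty] image_transport_base by simp
qed

end

lemma collection_transfer_exists:
  assumes dims: "int n - int d = int n' - int d'"
    and T: "T \<in> L n d" and T': "T' \<in> L n' d'" and \<sigma>: "bij_betw \<sigma> T T'"
    and codim: "\<And>A. A \<in> T \<Longrightarrow> codim d' (\<sigma> A) = codim d A"
  obtains h where "collection_transfer n d n' d' T T' \<sigma> h"
proof -
  have "\<exists>g. bij_betw g (complement n A) (complement n' (\<sigma> A))" if A: "A \<in> T" for A
  proof -
    have "card (complement n A) = card (complement n' (\<sigma> A))"
      using codim[OF A] dims codim_eq_card_complement[OF L_subset[OF T A], of d]
        codim_eq_card_complement[OF L_subset[OF T' bij_betw_apply[OF \<sigma> A]], of d']
      by simp
    then show ?thesis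
      by (simp add: finite_same_card_bij)
  qed
  then obtain h where "\<And>A. A \<in> T \<Longrightarrow> bij_betw (h A) (complement n A) (complement n' (\<sigma> A))"
    by metis
  then have "collection_transfer n d n' d' T T' \<sigma> h"
    using dims T T' \<sigma> by unfold_locales
  then show ?thesis
    by (rule that)
qed

lemma bij_betw_set_nth:
  assumes "distinct xs" "distinct ys" "length xs = length ys"
  obtains \<sigma> where "bij_betw \<sigma> (set xs) (set ys)" "\<And>i. i < length xs \<Longrightarrow> \<sigma> (xs ! i) = ys ! i"
proof
  have xs: "bij_betw (nth xs) {..<length xs} (set xs)"
    by (rule bij_betw_nth) (simp_all add: assms)
  have ys: "bij_betw (nth ys) {..<length xs} (set ys)"
    by (rule bij_betw_nth) (simp_all add: assms)
  show "bij_betw (nth ys \<circ> inv_into {..<length xs} (nth xs)) (set xs) (set ys)"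
    using bij_betw_trans[OF bij_betw_inv_into[OF xs] ys] .
  show "(nth ys \<circ> inv_into {..<length xs} (nth xs)) (xs ! i) = ys ! i" if "i < length xs" for i
    using inv_into_f_f[OF bij_betw_imp_inj_on[OF xs]] that by simp
qed

theorem corollary4p3:
  fixes u d d' :: nat and Ts Ts' :: "nat set list"
  assumes "u \<ge> 1"
    and "distinct Ts" and "distinct Ts'"
    and "length Ts = length Ts'"
    and "set Ts \<in> L (d + u) d"
    and "set Ts' \<in> L (d' + u) d'"
    and "\<forall>i < length Ts. codim d (Ts ! i) = codim d' (Ts' ! i)"
  shows "mubar u d (set Ts) = mubar u d' (set Ts')"
proof -
  obtain \<sigma> where \<sigma>: "bij_betw \<sigma> (set Ts) (set Ts')"
    and \<sigma>_nth: "\<And>i. i < length Ts \<Longrightarrow> \<sigma> (Ts ! i) = Ts' ! i"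
    using bij_betw_set_nth[OF assms(2-4)] by blast
  have "codim d' (\<sigma> A) = codim d A" if "A \<in> set Ts" for A
    using that assms(7) \<sigma>_nth by (auto simp: in_set_conv_nth)
  then obtain h where "collection_transfer (d + u) d (d' + u) d' (set Ts) (set Ts') \<sigma> h"
    using collection_transfer_exists[OF _ assms(5,6) \<sigma>] by force
  then show ?thesis
    unfolding mubar_def mu_def by (rule collection_transfer.mob_empty_transport)
qed

end
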